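(* In the common-ownership game below, suppose $\kappa_{ij}=\kappa$ for all $i\ne j$, where $\kappa\ge0$ and $2+\alpha(1-\kappa)>0$. Then every equilibrium $(\mathbf A^{\rm d},\mathbf q^{\rm d})$ with $\operatorname{rank}(\mathbf A^{\rm d})\ge2$ satisfies $$\mathbf A^{\rm d}\mathbf q^{\rm d}=\frac{\boldsymbol\beta}{1+\kappa},\qquad \mathbf q^{\rm d}=\frac{\boldsymbol\gamma}{2+\alpha(1-\kappa)},\qquad \bar s_{\boldsymbol\gamma}(\mathbf A^{\rm d})=\frac{\Big(\frac{2+\alpha(1-\kappa)}{1+\kappa}\Big)^2-\|\boldsymbol\gamma\|_2^2}{n(n-1)}.$$ Moreover, an equilibrium satisfying the first two equalities exists if and only if $r(\boldsymbol\gamma)\le\frac{2+\alpha(1-\kappa)}{1+\kappa}\le R(\boldsymbol\gamma)$.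
   Context: Model: integers $n\ge2$, $m\ge2$; $\alpha>0$, $\boldsymbol\beta\in\mathbb R^m$ with $\|\boldsymbol\beta\|_2=1$, $\boldsymbol\gamma\in\mathbb R^n$ with all $\gamma_i>0$. Firm $i$ chooses a unit vector $\mathbf a_i\in\mathbb R^m$ and $q_i\ge0$; $\mathbf A=[\mathbf a_1,\dots,\mathbf a_n]$. Standalone profit: $\Pi_i=\alpha q_i\mathbf a_i^\top(\boldsymbol\beta-\sum_{j\ne i}q_j\mathbf a_j)-(1+\alpha)q_i^2+\gamma_iq_i$. With ownership weights $\kappa_{ij}$ ($\kappa_{ii}=1$), firm $i$ maximizes $\tilde\Pi_i=\Pi_i+\sum_{j\ne i}\kappa_{ij}\Pi_j$; an equilibrium is a profile of mutual best responses. $\bar s_{\boldsymbol\gamma}(\mathbf A)=\binom n2^{-1}\sum_{1\le i<j\le n}\gamma_i\gamma_j\mathbf a_i^\top\mathbf a_j$. $R(\mathbf v)=\|\mathbf v\|_1$, $r(\mathbf v)=2\|\mathbf v\|_\infty-\|\mathbf v\|_1$. *)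

theory Defs
  imports "HOL-Analysis.Analysis"
begin

(* Firms are indexed by 0..n-1 (nat), strategies a i :: real^'m (column i of A),
   quantities q i :: real. Only indices < n are relevant. *)

definition profit ::
  "nat \<Rightarrow> real \<Rightarrow> real^'m \<Rightarrow> (nat \<Rightarrow> real) \<Rightarrow>
   (nat \<Rightarrow> real^'m) \<Rightarrow> (nat \<Rightarrow> real) \<Rightarrow> nat \<Rightarrow> real" where
  "profit n \<alpha> \<beta> \<gamma> a q i =
     \<alpha> * q i * (a i \<bullet> (\<beta> - (\<Sum>j\<in>{..<n} - {i}. q j *\<^sub>R a j)))
     - (1 + \<alpha>) * (q i)\<^sup>2 + \<gamma> i * q i"

definition co_profit ::
  "nat \<Rightarrow> real \<Rightarrow> real^'m \<Rightarrow> (nat \<Rightarrow> real) \<Rightarrow> (nat \<Rightarrow> nat \<Rightarrow> real) \<Rightarrow>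
   (nat \<Rightarrow> real^'m) \<Rightarrow> (nat \<Rightarrow> real) \<Rightarrow> nat \<Rightarrow> real" where
  "co_profit n \<alpha> \<beta> \<gamma> K a q i =
     profit n \<alpha> \<beta> \<gamma> a q i + (\<Sum>j\<in>{..<n} - {i}. K i j * profit n \<alpha> \<beta> \<gamma> a q j)"

definition equilibrium ::
  "nat \<Rightarrow> real \<Rightarrow> real^'m \<Rightarrow> (nat \<Rightarrow> real) \<Rightarrow> (nat \<Rightarrow> nat \<Rightarrow> real) \<Rightarrow>
   (nat \<Rightarrow> real^'m) \<Rightarrow> (nat \<Rightarrow> real) \<Rightarrow> bool" where
  "equilibrium n \<alpha> \<beta> \<gamma> K a q \<longleftrightarrow>
     (\<forall>i<n. norm (a i) = 1 \<and> q i \<ge> 0 \<and>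
        (\<forall>a' q'. norm (a' :: real^'m) = 1 \<longrightarrow> q' \<ge> 0 \<longrightarrow>
           co_profit n \<alpha> \<beta> \<gamma> K (a(i := a')) (q(i := q')) i
             \<le> co_profit n \<alpha> \<beta> \<gamma> K a q i))"

definition rankA :: "nat \<Rightarrow> (nat \<Rightarrow> real^'m) \<Rightarrow> nat" where
  "rankA n a = dim (a ` {..<n})"

definition Aq :: "nat \<Rightarrow> (nat \<Rightarrow> real^'m) \<Rightarrow> (nat \<Rightarrow> real) \<Rightarrow> real^'m" where
  "Aq n a q = (\<Sum>i<n. q i *\<^sub>R a i)"

definition sbar :: "nat \<Rightarrow> (nat \<Rightarrow> real) \<Rightarrow> (nat \<Rightarrow> real^'m) \<Rightarrow> real" where
  "sbar n \<gamma> a = (\<Sum>(i,j)\<in>{(i,j). i < j \<and> j < n}. \<gamma> i * \<gamma> j * (a i \<bullet> a j))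
                  / real (n choose 2)"

definition norm1 :: "nat \<Rightarrow> (nat \<Rightarrow> real) \<Rightarrow> real" where
  "norm1 n v = (\<Sum>i<n. \<bar>v i\<bar>)"

definition norminf :: "nat \<Rightarrow> (nat \<Rightarrow> real) \<Rightarrow> real" where
  "norminf n v = Max ((\<lambda>i. \<bar>v i\<bar>) ` {..<n})"

definition norm2sq :: "nat \<Rightarrow> (nat \<Rightarrow> real) \<Rightarrow> real" where
  "norm2sq n v = (\<Sum>i<n. (v i)\<^sup>2)"

definition Rfun :: "nat \<Rightarrow> (nat \<Rightarrow> real) \<Rightarrow> real" where
  "Rfun n v = norm1 n v"

definition rfun :: "nat \<Rightarrow> (nat \<Rightarrow> real) \<Rightarrow> real" where
  "rfun n v = 2 * norminf n v - norm1 n v"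

end

theory Submission
  imports Defs
begin

(* Firm i's objective depends on its own choice (a_i, q_i) only through
   alpha q_i a_i.V_i - (1 + alpha) q_i^2 + gamma_i q_i with V_i = beta - (1 + kappa) sum_{j ~= i} q_j a_j,
   so a best response points a_i along V_i and sets 2 (1 + alpha) q_i = alpha |V_i| + gamma_i.
   Hence W = beta - (1 + kappa) A q = (|V_i| - (1 + kappa) q_i) a_i is parallel to every a_i; when A
   has rank at least 2 this forces W = 0, which gives A q = beta / (1 + kappa), then
   q = gamma / (2 + alpha (1 - kappa)), and sbar by expanding |sum_i gamma_i a_i|^2.
   Conversely, such an equilibrium amounts to unit vectors a_i with sum_i gamma_i a_i equal to a
   given vector of length L = (2 + alpha (1 - kappa)) / (1 + kappa): a closed polygon with sides
   gamma_1, ..., gamma_n, L. In dimension at least 2 it exists iff no side is longer than the sum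
   of the others, which is r(gamma) <= L <= R(gamma). *)

subsection \<open>Closing a polygon with unit vectors\<close>

lemma exists_unit_vector_at_distance:
  fixes T :: "'a::euclidean_space"
  assumes "2 \<le> DIM('a)" and "G \<ge> 0"
    and "\<bar>norm T - G\<bar> \<le> L" and "L \<le> norm T + G"
  shows "\<exists>b. norm b = 1 \<and> norm (T - G *\<^sub>R b) = L"
proof -
  obtain u :: 'a where u: "norm u = 1" "T = norm T *\<^sub>R u"
  proof (cases "T = 0")
    case True
    obtain e :: 'a where "e \<in> Basis" using nonempty_Basis by blast
    with True show ?thesis using that[of e] by simp
  next
    case False
    then show ?thesis using that[of "sgn T"] by (simp add: norm_sgn sgn_div_norm)
  qed
  define f where "f b = norm (T - G *\<^sub>R b)" for b
  have "connected (f ` sphere 0 1)"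
    unfolding f_def
    by (intro connected_continuous_image connected_sphere assms(1) continuous_intros)
  moreover have "f u = \<bar>norm T - G\<bar>"
    unfolding f_def by (subst u(2)) (simp add: u(1) flip: scaleR_diff_left)
  moreover have "f (- u) = norm T + G"
    unfolding f_def by (subst u(2)) (simp add: u(1) assms(2) flip: scaleR_add_left)
  moreover have "u \<in> sphere 0 1" "- u \<in> sphere 0 1"
    using u(1) by auto
  ultimately have "{\<bar>norm T - G\<bar>..norm T + G} \<subseteq> f ` sphere 0 1"
    by (metis connected_contains_Icc image_eqI)
  then show ?thesis
    using assms(3,4) unfolding f_def by fastforce
qed

lemma exists_unit_weighted_sum_eq:
  fixes T :: "'a::euclidean_space" and \<gamma> :: "nat \<Rightarrow> real" and n :: nat
  assumes "2 \<le> DIM('a)" and "\<forall>i<n. \<gamma> i \<ge> 0"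
    and "norm T \<le> (\<Sum>i<n. \<gamma> i)"
    and "\<forall>i<n. 2 * \<gamma> i \<le> norm T + (\<Sum>i<n. \<gamma> i)"
  shows "\<exists>a. (\<forall>i<n. norm (a i) = 1) \<and> (\<Sum>i<n. \<gamma> i *\<^sub>R a i) = T"
  using assms(2-)
proof (induction n arbitrary: T)
  case 0
  then show ?case by simp
next
  case (Suc n)
  define G where "G = \<gamma> n"
  define S where "S = (\<Sum>i<n. \<gamma> i)"
  define L where "L = min S (norm T + G)"
  have "G \<ge> 0" using Suc.prems(1) by (simp add: G_def)
  have \<gamma>_le_S: "\<gamma> i \<le> S" if "i < n" for i
    unfolding S_def using Suc.prems(1) that by (intro member_le_sum) auto
  have "2 * G \<le> norm T + S + G" "norm T \<le> S + G"
    using Suc.prems(2,3) by (auto simp: G_def S_def)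
  then have "\<bar>norm T - G\<bar> \<le> L" "L \<le> norm T + G"
    using \<open>G \<ge> 0\<close> norm_ge_zero[of T] by (auto simp: L_def abs_le_iff)
  then obtain b where b: "norm b = 1" "norm (T - G *\<^sub>R b) = L"
    using exists_unit_vector_at_distance[OF assms(1) \<open>G \<ge> 0\<close>] by blast
  have "\<exists>a. (\<forall>i<n. norm (a i) = 1) \<and> (\<Sum>i<n. \<gamma> i *\<^sub>R a i) = T - G *\<^sub>R b"
  proof (rule Suc.IH)
    show "\<forall>i<n. 2 * \<gamma> i \<le> norm (T - G *\<^sub>R b) + (\<Sum>i<n. \<gamma> i)"
    proof (intro allI impI)
      fix i assume "i < n"
      then have "2 * \<gamma> i \<le> norm T + S + G" "\<gamma> i \<le> S"
        using Suc.prems(3)[rule_format, of i] \<gamma>_le_S by (simp_all add: G_def S_def)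
      then show "2 * \<gamma> i \<le> norm (T - G *\<^sub>R b) + (\<Sum>i<n. \<gamma> i)"
        unfolding b(2) L_def S_def[symmetric] by (simp split: split_min)
    qed
  qed (use Suc.prems(1) b(2) in \<open>auto simp: L_def S_def\<close>)
  then obtain a where a: "\<forall>i<n. norm (a i) = 1" "(\<Sum>i<n. \<gamma> i *\<^sub>R a i) = T - G *\<^sub>R b"
    by blast
  have "(\<Sum>i<n. \<gamma> i *\<^sub>R (a(n := b)) i) = (\<Sum>i<n. \<gamma> i *\<^sub>R a i)"
    by (intro sum.cong) auto
  then have "(\<Sum>i<Suc n. \<gamma> i *\<^sub>R (a(n := b)) i) = T"
    using a(2) by (simp add: G_def)
  moreover have "\<forall>i<Suc n. norm ((a(n := b)) i) = 1"
    using a(1) b(1) by (auto simp: less_Suc_eq)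
  ultimately show ?case by blast
qed

lemma exists_unit_weighted_sum_eq_iff:
  fixes T :: "'a::euclidean_space" and \<gamma> :: "nat \<Rightarrow> real" and n :: nat
  assumes "2 \<le> DIM('a)" and "\<forall>i<n. \<gamma> i \<ge> 0"
  shows "(\<exists>a. (\<forall>i<n. norm (a i) = 1) \<and> (\<Sum>i<n. \<gamma> i *\<^sub>R a i) = T) \<longleftrightarrow>
         norm T \<le> (\<Sum>i<n. \<gamma> i) \<and> (\<forall>i<n. 2 * \<gamma> i \<le> norm T + (\<Sum>i<n. \<gamma> i))"
proof
  assume "\<exists>a. (\<forall>i<n. norm (a i) = 1) \<and> (\<Sum>i<n. \<gamma> i *\<^sub>R a i) = T"
  then obtain a where a: "\<forall>i<n. norm (a i) = 1" and T: "T = (\<Sum>i<n. \<gamma> i *\<^sub>R a i)"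
    by auto
  have side: "norm (\<gamma> i *\<^sub>R a i) = \<gamma> i" if "i < n" for i
    using a assms(2) that by simp
  have norm_partial_sum: "norm (\<Sum>i\<in>I. \<gamma> i *\<^sub>R a i) \<le> (\<Sum>i\<in>I. \<gamma> i)" if "I \<subseteq> {..<n}" for I
  proof -
    have "norm (\<Sum>i\<in>I. \<gamma> i *\<^sub>R a i) \<le> (\<Sum>i\<in>I. norm (\<gamma> i *\<^sub>R a i))"
      by (rule norm_sum)
    also have "\<dots> = (\<Sum>i\<in>I. \<gamma> i)"
      using side that by (intro sum.cong) auto
    finally show ?thesis .
  qed
  show "norm T \<le> (\<Sum>i<n. \<gamma> i) \<and> (\<forall>i<n. 2 * \<gamma> i \<le> norm T + (\<Sum>i<n. \<gamma> i))"
  proof (intro conjI allI impI)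
    show "norm T \<le> (\<Sum>i<n. \<gamma> i)" using norm_partial_sum[of "{..<n}"] T by simp
  next
    fix k assume "k < n"
    then have split: "(\<Sum>i<n. f i) = f k + (\<Sum>i\<in>{..<n} - {k}. f i)" for f :: "nat \<Rightarrow> 'b::comm_monoid_add"
      by (intro sum.remove) auto
    have "\<gamma> k = norm (T - (\<Sum>i\<in>{..<n} - {k}. \<gamma> i *\<^sub>R a i))"
      using side[OF \<open>k < n\<close>] by (simp add: T split)
    also have "\<dots> \<le> norm T + (\<Sum>i\<in>{..<n} - {k}. \<gamma> i)"
      by (intro order_trans[OF norm_triangle_ineq4] add_left_mono norm_partial_sum) auto
    finally show "2 * \<gamma> k \<le> norm T + (\<Sum>i<n. \<gamma> i)" by (simp add: split)
  qed
qed (use exists_unit_weighted_sum_eq[OF assms] in blast)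

lemma rfun_le_iff:
  assumes "n > 0"
  shows "rfun n v \<le> x \<longleftrightarrow> (\<forall>i<n. 2 * \<bar>v i\<bar> \<le> x + norm1 n v)"
proof -
  have "rfun n v \<le> x \<longleftrightarrow> norminf n v \<le> (x + norm1 n v) / 2"
    unfolding rfun_def by (simp add: field_simps)
  also have "\<dots> \<longleftrightarrow> (\<forall>i<n. \<bar>v i\<bar> \<le> (x + norm1 n v) / 2)"
    unfolding norminf_def using assms by (subst Max_le_iff) auto
  finally show ?thesis by (simp add: field_simps)
qed

lemma exists_unit_weighted_sum_eq_iff_rfun_Rfun:
  fixes T :: "'a::euclidean_space" and \<gamma> :: "nat \<Rightarrow> real" and n :: nat
  assumes "2 \<le> DIM('a)" and "n > 0" and "\<forall>i<n. \<gamma> i \<ge> 0"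
  shows "(\<exists>a. (\<forall>i<n. norm (a i) = 1) \<and> (\<Sum>i<n. \<gamma> i *\<^sub>R a i) = T) \<longleftrightarrow>
         rfun n \<gamma> \<le> norm T \<and> norm T \<le> Rfun n \<gamma>"
proof -
  have "Rfun n \<gamma> = (\<Sum>i<n. \<gamma> i)"
    using assms(3) by (simp add: Rfun_def norm1_def)
  then show ?thesis
    unfolding exists_unit_weighted_sum_eq_iff[OF assms(1,3)] rfun_le_iff[OF assms(2)]
    using assms(3) by (auto simp: Rfun_def)
qed

subsection \<open>Pairwise similarity\<close>

lemma sum_symmetric_eq_diagonal_plus_pairs:
  fixes h :: "nat \<Rightarrow> nat \<Rightarrow> 'a::comm_semiring_1"
  assumes "\<And>i j. h i j = h j i"
  shows "(\<Sum>i<n. \<Sum>j<n. h i j) = (\<Sum>i<n. h i i) + 2 * (\<Sum>(i, j)\<in>{(i, j). i < j \<and> j < n}. h i j)"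
proof (induction n)
  case 0
  then show ?case by simp
next
  case (Suc n)
  have pairs: "{(i, j). i < j \<and> j < Suc n} = {(i, j). i < j \<and> j < n} \<union> (\<lambda>i. (i, n)) ` {..<n}"
    by (auto simp: less_Suc_eq)
  have "finite {(i, j). i < j \<and> j < n}"
    by (rule finite_subset[of _ "{..<n} \<times> {..<n}"]) auto
  then have "(\<Sum>(i, j)\<in>{(i, j). i < j \<and> j < Suc n}. h i j)
      = (\<Sum>(i, j)\<in>{(i, j). i < j \<and> j < n}. h i j) + (\<Sum>i<n. h i n)"
    unfolding pairs by (subst sum.union_disjoint) (auto simp: sum.reindex inj_on_def)
  moreover have "(\<Sum>i<Suc n. \<Sum>j<Suc n. h i j)
      = (\<Sum>i<n. \<Sum>j<n. h i j) + (\<Sum>i<n. h i n) + (\<Sum>i<n. h i n) + h n n"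
    using assms by (simp add: sum.distrib add.assoc)
  ultimately show ?case
    using Suc.IH by (simp add: algebra_simps mult_2)
qed

lemma real_choose_two: "real (n choose 2) = real n * (real n - 1) / 2"
  by (induction n) (simp_all add: numeral_2_eq_2 field_simps)

lemma sbar_eq_norm_weighted_sum:
  fixes a :: "nat \<Rightarrow> real^'m"
  assumes "\<forall>i<n. norm (a i) = 1"
  shows "sbar n \<gamma> a = ((norm (\<Sum>i<n. \<gamma> i *\<^sub>R a i))\<^sup>2 - norm2sq n \<gamma>) / (real n * (real n - 1))"
proof -
  let ?pairs = "\<Sum>(i, j)\<in>{(i, j). i < j \<and> j < n}. \<gamma> i * \<gamma> j * (a i \<bullet> a j)"
  have "(norm (\<Sum>i<n. \<gamma> i *\<^sub>R a i))\<^sup>2 = (\<Sum>i<n. \<Sum>j<n. \<gamma> i * \<gamma> j * (a i \<bullet> a j))"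
    unfolding power2_norm_eq_inner inner_sum_left inner_sum_right
    by (simp add: sum_distrib_left mult.assoc) (intro sum.cong refl; simp add: inner_commute)
  also have "\<dots> = (\<Sum>i<n. \<gamma> i * \<gamma> i * (a i \<bullet> a i)) + 2 * ?pairs"
    by (rule sum_symmetric_eq_diagonal_plus_pairs) (simp add: inner_commute)
  also have "(\<Sum>i<n. \<gamma> i * \<gamma> i * (a i \<bullet> a i)) = norm2sq n \<gamma>"
    unfolding norm2sq_def using assms
    by (intro sum.cong) (simp_all add: power2_eq_square flip: power2_norm_eq_inner)
  finally have "?pairs = ((norm (\<Sum>i<n. \<gamma> i *\<^sub>R a i))\<^sup>2 - norm2sq n \<gamma>) / 2"
    by simp
  then show ?thesis
    unfolding sbar_def real_choose_two by (simp add: field_simps)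
qed

subsection \<open>Best responses\<close>

definition deviation_payoff :: "real \<Rightarrow> real \<Rightarrow> 'a::real_inner \<Rightarrow> 'a \<Rightarrow> real \<Rightarrow> real" where
  "deviation_payoff \<alpha> g V b s = \<alpha> * s * (b \<bullet> V) - (1 + \<alpha>) * s\<^sup>2 + g * s"

lemma deviation_payoff_maximizer_iff:
  fixes V a\<^sub>0 :: "'a::real_inner"
  assumes "\<alpha> > 0" and "g > 0" and "norm a\<^sub>0 = 1" and "q\<^sub>0 \<ge> 0"
  shows "(\<forall>b s. norm b = 1 \<longrightarrow> s \<ge> 0 \<longrightarrow> deviation_payoff \<alpha> g V b s \<le> deviation_payoff \<alpha> g V a\<^sub>0 q\<^sub>0)
         \<longleftrightarrow> V = norm V *\<^sub>R a\<^sub>0 \<and> 2 * (1 + \<alpha>) * q\<^sub>0 = \<alpha> * norm V + g"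
proof -
  define M where "M = (\<alpha> * norm V + g) / (2 * (1 + \<alpha>))"
  have "M > 0"
    using assms(1,2) unfolding M_def by (intro divide_pos_pos add_nonneg_pos) auto
  have g_eq: "g = 2 * (1 + \<alpha>) * M - \<alpha> * norm V"
    using assms(1) by (simp add: M_def)
  have completed_square: "deviation_payoff \<alpha> g V b s
      = (1 + \<alpha>) * M\<^sup>2 - (1 + \<alpha>) * (s - M)\<^sup>2 - \<alpha> * s * (norm V - b \<bullet> V)" for b s
    unfolding deviation_payoff_def g_eq by (simp add: power2_eq_square algebra_simps)
  have cauchy_schwarz: "b \<bullet> V \<le> norm V" if "norm b = 1" for b
    using norm_cauchy_schwarz[of b V] that by simp
  have bounded: "deviation_payoff \<alpha> g V b s \<le> (1 + \<alpha>) * M\<^sup>2" if "norm b = 1" "s \<ge> 0" for b s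
  proof -
    have "0 \<le> \<alpha> * s * (norm V - b \<bullet> V)"
      using assms(1) cauchy_schwarz[OF that(1)] that(2) by simp
    moreover have "0 \<le> (1 + \<alpha>) * (s - M)\<^sup>2"
      using assms(1) by simp
    ultimately show ?thesis
      unfolding completed_square by linarith
  qed
  obtain u :: 'a where u: "norm u = 1" "u \<bullet> V = norm V"
  proof (cases "V = 0")
    case True
    then show ?thesis using that assms(3) by simp
  next
    case False
    then show ?thesis
      using that[of "sgn V"] by (simp add: norm_sgn sgn_div_norm power2_eq_square flip: power2_norm_eq_inner)
  qed
  show ?thesis
  proof
    assume "\<forall>b s. norm b = 1 \<longrightarrow> s \<ge> 0 \<longrightarrow> deviation_payoff \<alpha> g V b s \<le> deviation_payoff \<alpha> g V a\<^sub>0 q\<^sub>0"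
    moreover have "deviation_payoff \<alpha> g V u M = (1 + \<alpha>) * M\<^sup>2"
      using u(2) by (simp add: completed_square)
    ultimately have "(1 + \<alpha>) * M\<^sup>2 \<le> deviation_payoff \<alpha> g V a\<^sub>0 q\<^sub>0"
      using u(1) \<open>M > 0\<close> by (metis less_imp_le)
    then have "(1 + \<alpha>) * (q\<^sub>0 - M)\<^sup>2 + \<alpha> * q\<^sub>0 * (norm V - a\<^sub>0 \<bullet> V) \<le> 0"
      unfolding completed_square by simp
    moreover have "\<alpha> * q\<^sub>0 * (norm V - a\<^sub>0 \<bullet> V) \<ge> 0"
      using assms(1,4) cauchy_schwarz[OF assms(3)] by simp
    moreover have "(1 + \<alpha>) * (q\<^sub>0 - M)\<^sup>2 \<ge> 0"
      using assms(1) by simp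
    ultimately have "(1 + \<alpha>) * (q\<^sub>0 - M)\<^sup>2 = 0" and "\<alpha> * q\<^sub>0 * (norm V - a\<^sub>0 \<bullet> V) = 0"
      by linarith+
    then have "q\<^sub>0 = M" and "\<alpha> * q\<^sub>0 * (norm V - a\<^sub>0 \<bullet> V) = 0"
      using assms(1) by simp_all
    then have "a\<^sub>0 \<bullet> V = norm a\<^sub>0 * norm V"
      using assms(1,3) \<open>M > 0\<close> by simp
    then have "V = norm V *\<^sub>R a\<^sub>0"
      using norm_cauchy_schwarz_eq[of a\<^sub>0 V] assms(3) by simp
    with \<open>q\<^sub>0 = M\<close> show "V = norm V *\<^sub>R a\<^sub>0 \<and> 2 * (1 + \<alpha>) * q\<^sub>0 = \<alpha> * norm V + g"
      using assms(1) by (simp add: M_def)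
  next
    assume "V = norm V *\<^sub>R a\<^sub>0 \<and> 2 * (1 + \<alpha>) * q\<^sub>0 = \<alpha> * norm V + g"
    then have V: "V = norm V *\<^sub>R a\<^sub>0" and "q\<^sub>0 = M"
      using assms(1) by (simp_all add: M_def field_simps)
    from V have "a\<^sub>0 \<bullet> V = a\<^sub>0 \<bullet> (norm V *\<^sub>R a\<^sub>0)"
      by (rule arg_cong)
    also have "\<dots> = norm V"
      using assms(3) by (simp add: norm_eq_1)
    finally have "a\<^sub>0 \<bullet> V = norm V" .
    with \<open>q\<^sub>0 = M\<close> have "deviation_payoff \<alpha> g V a\<^sub>0 q\<^sub>0 = (1 + \<alpha>) * M\<^sup>2"
      by (simp add: completed_square)
    then show "\<forall>b s. norm b = 1 \<longrightarrow> s \<ge> 0 \<longrightarrow> deviation_payoff \<alpha> g V b s \<le> deviation_payoff \<alpha> g V a\<^sub>0 q\<^sub>0"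
      using bounded by simp
  qed
qed

subsection \<open>Equilibria\<close>

(* Firm i's quantity enters each rival's profit through - alpha q_i q_j a_i.a_j; weighting these
   by kappa adds kappa times the rivals' supply to firm i's own cross term, hence the factor 1 + kappa. *)
definition residual_demand ::
  "nat \<Rightarrow> real \<Rightarrow> real^'m \<Rightarrow> (nat \<Rightarrow> real^'m) \<Rightarrow> (nat \<Rightarrow> real) \<Rightarrow> nat \<Rightarrow> real^'m" where
  "residual_demand n \<kappa> \<beta> a q i = \<beta> - (1 + \<kappa>) *\<^sub>R (\<Sum>j\<in>{..<n} - {i}. q j *\<^sub>R a j)"

lemma Aq_remove:
  assumes "i < n"
  shows "Aq n a q = q i *\<^sub>R a i + (\<Sum>j\<in>{..<n} - {i}. q j *\<^sub>R a j)"
  unfolding Aq_def using assms by (intro sum.remove) auto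

lemma residual_demand_eq:
  assumes "i < n"
  shows "residual_demand n \<kappa> \<beta> a q i = \<beta> - (1 + \<kappa>) *\<^sub>R Aq n a q + ((1 + \<kappa>) * q i) *\<^sub>R a i"
  unfolding residual_demand_def Aq_remove[OF assms] by (simp add: algebra_simps)

lemma weighted_sum_eq_scaleR_Aq:
  assumes "D \<noteq> 0" and "\<forall>i<n. q i = \<gamma> i / D"
  shows "(\<Sum>i<n. \<gamma> i *\<^sub>R a i) = D *\<^sub>R Aq n a q"
  unfolding Aq_def scaleR_sum_right using assms by (intro sum.cong) auto

lemma co_profit_fun_upd:
  fixes a :: "nat \<Rightarrow> real^'m"
  assumes "i < n"
  obtains C where "\<And>a' q'. co_profit n \<alpha> \<beta> \<gamma> (\<lambda>i j. \<kappa>) (a(i := a')) (q(i := q')) i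
      = deviation_payoff \<alpha> (\<gamma> i) (residual_demand n \<kappa> \<beta> a q i) a' q' + C"
proof -
  define S where "S = (\<Sum>j\<in>{..<n} - {i}. q j *\<^sub>R a j)"
  define R where "R j = \<alpha> * q j * (a j \<bullet> (\<beta> - (\<Sum>k\<in>{..<n} - {j} - {i}. q k *\<^sub>R a k)))
      - (1 + \<alpha>) * (q j)\<^sup>2 + \<gamma> j * q j" for j
  have "co_profit n \<alpha> \<beta> \<gamma> (\<lambda>i j. \<kappa>) (a(i := a')) (q(i := q')) i
      = deviation_payoff \<alpha> (\<gamma> i) (residual_demand n \<kappa> \<beta> a q i) a' q' + \<kappa> * sum R ({..<n} - {i})"
    for a' q'
  proof -
    have "(\<Sum>j\<in>{..<n} - {i}. (q(i := q')) j *\<^sub>R (a(i := a')) j) = S"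
      unfolding S_def by (intro sum.cong) auto
    then have own: "profit n \<alpha> \<beta> \<gamma> (a(i := a')) (q(i := q')) i
        = \<alpha> * q' * (a' \<bullet> (\<beta> - S)) - (1 + \<alpha>) * q'\<^sup>2 + \<gamma> i * q'"
      unfolding profit_def by simp
    have rival: "profit n \<alpha> \<beta> \<gamma> (a(i := a')) (q(i := q')) j = R j - \<alpha> * q' * (q j * (a j \<bullet> a'))"
      if j: "j \<in> {..<n} - {i}" for j
    proof -
      have "(\<Sum>k\<in>{..<n} - {j}. (q(i := q')) k *\<^sub>R (a(i := a')) k)
          = q' *\<^sub>R a' + (\<Sum>k\<in>{..<n} - {j} - {i}. (q(i := q')) k *\<^sub>R (a(i := a')) k)"
        using assms j by (subst sum.remove[of _ i]) auto
      also have "\<dots> = q' *\<^sub>R a' + (\<Sum>k\<in>{..<n} - {j} - {i}. q k *\<^sub>R a k)"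
        by (intro arg_cong2[where f = "(+)"] sum.cong) auto
      finally show ?thesis
        using j unfolding profit_def R_def by (simp add: inner_add_right inner_diff_right algebra_simps)
    qed
    have "(\<Sum>j\<in>{..<n} - {i}. \<kappa> * (\<alpha> * q' * (q j * (a j \<bullet> a')))) = \<kappa> * \<alpha> * q' * (a' \<bullet> S)"
      unfolding S_def by (simp add: inner_sum_right inner_commute sum_distrib_left mult.assoc)
    then show ?thesis
      unfolding co_profit_def own residual_demand_def deviation_payoff_def S_def[symmetric]
      by (simp add: rival right_diff_distrib sum_subtractf sum_distrib_left inner_diff_right algebra_simps)
  qed
  then show thesis by (rule that)
qed

lemma equilibrium_iff:
  fixes a :: "nat \<Rightarrow> real^'m"
  assumes "\<alpha> > 0" and "\<forall>i<n. \<gamma> i > 0"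
  shows "equilibrium n \<alpha> \<beta> \<gamma> (\<lambda>i j. \<kappa>) a q \<longleftrightarrow>
    (\<forall>i<n. norm (a i) = 1 \<and> q i \<ge> 0 \<and>
       residual_demand n \<kappa> \<beta> a q i = norm (residual_demand n \<kappa> \<beta> a q i) *\<^sub>R a i \<and>
       2 * (1 + \<alpha>) * q i = \<alpha> * norm (residual_demand n \<kappa> \<beta> a q i) + \<gamma> i)"
proof -
  have "(norm (a i) = 1 \<and> q i \<ge> 0 \<and>
      (\<forall>a' q'. norm (a' :: real^'m) = 1 \<longrightarrow> q' \<ge> 0 \<longrightarrow>
        co_profit n \<alpha> \<beta> \<gamma> (\<lambda>i j. \<kappa>) (a(i := a')) (q(i := q')) i \<le> co_profit n \<alpha> \<beta> \<gamma> (\<lambda>i j. \<kappa>) a q i))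
    \<longleftrightarrow> (norm (a i) = 1 \<and> q i \<ge> 0 \<and>
       residual_demand n \<kappa> \<beta> a q i = norm (residual_demand n \<kappa> \<beta> a q i) *\<^sub>R a i \<and>
       2 * (1 + \<alpha>) * q i = \<alpha> * norm (residual_demand n \<kappa> \<beta> a q i) + \<gamma> i)"
    if i: "i < n" for i
  proof -
    obtain C where C: "\<And>a' q'. co_profit n \<alpha> \<beta> \<gamma> (\<lambda>i j. \<kappa>) (a(i := a')) (q(i := q')) i
        = deviation_payoff \<alpha> (\<gamma> i) (residual_demand n \<kappa> \<beta> a q i) a' q' + C"
      using co_profit_fun_upd[OF i] by blast
    have "co_profit n \<alpha> \<beta> \<gamma> (\<lambda>i j. \<kappa>) a q i
        = deviation_payoff \<alpha> (\<gamma> i) (residual_demand n \<kappa> \<beta> a q i) (a i) (q i) + C"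
      using C[of "a i" "q i"] by simp
    then show ?thesis
      using deviation_payoff_maximizer_iff[OF assms(1), of "\<gamma> i" "a i" "q i"] assms(2) i
      by (auto simp: C)
  qed
  then show ?thesis
    unfolding equilibrium_def by blast
qed

lemma rankA_le_1_if_in_span:
  assumes "\<forall>i<n. a i \<in> span {w}"
  shows "rankA n a \<le> 1"
proof -
  have "dim (a ` {..<n}) \<le> card {w}"
    using assms by (intro dim_le_card) auto
  then show ?thesis by (simp add: rankA_def)
qed

lemma full_rank_equilibrium_Aq_q:
  fixes a :: "nat \<Rightarrow> real^'m"
  assumes "\<alpha> > 0" and "\<forall>i<n. \<gamma> i > 0" and "1 + \<kappa> > 0" and "2 + \<alpha> * (1 - \<kappa>) > 0"
    and "equilibrium n \<alpha> \<beta> \<gamma> (\<lambda>i j. \<kappa>) a q" and "rankA n a \<ge> 2"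
  shows "Aq n a q = (1 / (1 + \<kappa>)) *\<^sub>R \<beta>" and "\<forall>i<n. q i = \<gamma> i / (2 + \<alpha> * (1 - \<kappa>))"
proof -
  let ?V = "residual_demand n \<kappa> \<beta> a q"
  have E: "norm (a i) = 1" "?V i = norm (?V i) *\<^sub>R a i" "2 * (1 + \<alpha>) * q i = \<alpha> * norm (?V i) + \<gamma> i"
    if "i < n" for i
    using assms(5) that unfolding equilibrium_iff[OF assms(1,2)] by blast+
  define W where "W = \<beta> - (1 + \<kappa>) *\<^sub>R Aq n a q"
  define c where "c i = norm (?V i) - (1 + \<kappa>) * q i" for i
  have W: "W = c i *\<^sub>R a i" if "i < n" for i
    using residual_demand_eq[OF that, of \<kappa> \<beta> a q] E(2)[OF that]
    by (simp add: W_def c_def algebra_simps)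
  have "W = 0"
  proof (rule ccontr)
    assume "W \<noteq> 0"
    have "a i \<in> span {W}" if "i < n" for i
    proof -
      have "c i \<noteq> 0"
        using W[OF that] \<open>W \<noteq> 0\<close> by auto
      then have "a i = (1 / c i) *\<^sub>R W"
        using W[OF that] by simp
      then show ?thesis
        by (simp add: span_base span_scale)
    qed
    then show False
      using rankA_le_1_if_in_span[of n a W] assms(6) by simp
  qed
  then have "\<beta> = (1 + \<kappa>) *\<^sub>R Aq n a q"
    by (simp add: W_def)
  then show "Aq n a q = (1 / (1 + \<kappa>)) *\<^sub>R \<beta>"
    using assms(3) by simp
  show "\<forall>i<n. q i = \<gamma> i / (2 + \<alpha> * (1 - \<kappa>))"
  proof (intro allI impI)
    fix i assume "i < n"
    then have "c i = 0"
      using W[OF \<open>i < n\<close>] \<open>W = 0\<close> E(1)[OF \<open>i < n\<close>] by auto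
    then have "q i * (2 + \<alpha> * (1 - \<kappa>)) = \<gamma> i"
      using E(3)[OF \<open>i < n\<close>] by (simp add: c_def algebra_simps)
    then show "q i = \<gamma> i / (2 + \<alpha> * (1 - \<kappa>))"
      using assms(4) by (simp add: field_simps)
  qed
qed

lemma equilibrium_Aq_iff_unit_weighted_sum:
  fixes a :: "nat \<Rightarrow> real^'m"
  assumes "\<alpha> > 0" and "\<forall>i<n. \<gamma> i > 0" and "1 + \<kappa> > 0" and "2 + \<alpha> * (1 - \<kappa>) > 0"
    and q: "\<forall>i<n. q i = \<gamma> i / (2 + \<alpha> * (1 - \<kappa>))"
  shows "equilibrium n \<alpha> \<beta> \<gamma> (\<lambda>i j. \<kappa>) a q \<and> Aq n a q = (1 / (1 + \<kappa>)) *\<^sub>R \<beta> \<longleftrightarrow>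
    (\<forall>i<n. norm (a i) = 1) \<and> (\<Sum>i<n. \<gamma> i *\<^sub>R a i) = ((2 + \<alpha> * (1 - \<kappa>)) / (1 + \<kappa>)) *\<^sub>R \<beta>"
proof -
  define D where "D = 2 + \<alpha> * (1 - \<kappa>)"
  have sum_eq: "(\<Sum>i<n. \<gamma> i *\<^sub>R a i) = D *\<^sub>R Aq n a q"
    using weighted_sum_eq_scaleR_Aq[of D n q \<gamma> a] assms(4) q by (simp add: D_def)
  have Aq_iff: "Aq n a q = (1 / (1 + \<kappa>)) *\<^sub>R \<beta> \<longleftrightarrow> (\<Sum>i<n. \<gamma> i *\<^sub>R a i) = (D / (1 + \<kappa>)) *\<^sub>R \<beta>"
  proof -
    have "(D / (1 + \<kappa>)) *\<^sub>R \<beta> = D *\<^sub>R ((1 / (1 + \<kappa>)) *\<^sub>R \<beta>)"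
      by simp
    then show ?thesis
      unfolding sum_eq using assms(4) by (simp only: scaleR_cancel_left) (simp add: D_def)
  qed
  have "equilibrium n \<alpha> \<beta> \<gamma> (\<lambda>i j. \<kappa>) a q"
    if "\<forall>i<n. norm (a i) = 1" and "Aq n a q = (1 / (1 + \<kappa>)) *\<^sub>R \<beta>"
    unfolding equilibrium_iff[OF assms(1,2)]
  proof (intro allI impI conjI)
    fix i assume "i < n"
    have "q i \<ge> 0" and "q i * D = \<gamma> i"
      using q assms(2,4) \<open>i < n\<close> by (auto simp: D_def less_imp_le)
    moreover have V: "residual_demand n \<kappa> \<beta> a q i = ((1 + \<kappa>) * q i) *\<^sub>R a i"
      using residual_demand_eq[OF \<open>i < n\<close>, of \<kappa> \<beta> a q] that(2) assms(3) by simp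
    ultimately have "norm (residual_demand n \<kappa> \<beta> a q i) = (1 + \<kappa>) * q i"
      using that(1) \<open>i < n\<close> assms(3) by simp
    with V \<open>q i \<ge> 0\<close> \<open>q i * D = \<gamma> i\<close> that(1) \<open>i < n\<close>
    show "norm (a i) = 1" "q i \<ge> 0"
      "residual_demand n \<kappa> \<beta> a q i = norm (residual_demand n \<kappa> \<beta> a q i) *\<^sub>R a i"
      "2 * (1 + \<alpha>) * q i = \<alpha> * norm (residual_demand n \<kappa> \<beta> a q i) + \<gamma> i"
      by (simp_all add: D_def algebra_simps)
  qed
  then show ?thesis
    unfolding Aq_iff D_def[symmetric] equilibrium_def by auto
qed

lemma exists_equilibrium_Aq_q_iff_unit_weighted_sum:
  assumes "\<alpha> > 0" and "\<forall>i<n. \<gamma> i > 0" and "1 + \<kappa> > 0" and "2 + \<alpha> * (1 - \<kappa>) > 0"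
  shows "(\<exists>(a :: nat \<Rightarrow> real^'m) q. equilibrium n \<alpha> \<beta> \<gamma> (\<lambda>i j. \<kappa>) a q \<and>
            Aq n a q = (1 / (1 + \<kappa>)) *\<^sub>R \<beta> \<and> (\<forall>i<n. q i = \<gamma> i / (2 + \<alpha> * (1 - \<kappa>))))
    \<longleftrightarrow> (\<exists>a :: nat \<Rightarrow> real^'m. (\<forall>i<n. norm (a i) = 1) \<and>
            (\<Sum>i<n. \<gamma> i *\<^sub>R a i) = ((2 + \<alpha> * (1 - \<kappa>)) / (1 + \<kappa>)) *\<^sub>R \<beta>)"
  (is "?equilibrium \<longleftrightarrow> ?polygon")
proof
  assume ?equilibrium
  then show ?polygon
    using equilibrium_Aq_iff_unit_weighted_sum[OF assms] by blast
next
  assume ?polygon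
  then show ?equilibrium
    using equilibrium_Aq_iff_unit_weighted_sum[OF assms, of "\<lambda>i. \<gamma> i / (2 + \<alpha> * (1 - \<kappa>))"]
    by auto
qed

lemma full_rank_equilibrium_sbar:
  fixes a :: "nat \<Rightarrow> real^'m"
  assumes "\<alpha> > 0" and "\<forall>i<n. \<gamma> i > 0" and "1 + \<kappa> > 0" and "2 + \<alpha> * (1 - \<kappa>) > 0"
    and "norm \<beta> = 1" and "equilibrium n \<alpha> \<beta> \<gamma> (\<lambda>i j. \<kappa>) a q" and "rankA n a \<ge> 2"
  shows "sbar n \<gamma> a = (((2 + \<alpha> * (1 - \<kappa>)) / (1 + \<kappa>))\<^sup>2 - norm2sq n \<gamma>) / (real n * (real n - 1))"
proof -
  have "(\<forall>i<n. norm (a i) = 1) \<and>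
      (\<Sum>i<n. \<gamma> i *\<^sub>R a i) = ((2 + \<alpha> * (1 - \<kappa>)) / (1 + \<kappa>)) *\<^sub>R \<beta>"
    using equilibrium_Aq_iff_unit_weighted_sum[OF assms(1-4)]
      full_rank_equilibrium_Aq_q[OF assms(1-4,6,7)] assms(6) by blast
  then show ?thesis
    using sbar_eq_norm_weighted_sum[of n a \<gamma>] assms(3-5) by simp
qed

theorem proposition6:
  fixes n :: nat and \<alpha> \<kappa> :: real and \<beta> :: "real^'m" and \<gamma> :: "nat \<Rightarrow> real"
  assumes "n \<ge> 2" and "CARD('m) \<ge> 2"
    and "\<alpha> > 0" and "norm \<beta> = 1" and "\<forall>i<n. \<gamma> i > 0"
    and "\<kappa> \<ge> 0" and "2 + \<alpha> * (1 - \<kappa>) > 0"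
  shows
    "(\<forall>(a :: nat \<Rightarrow> real^'m) q.
        equilibrium n \<alpha> \<beta> \<gamma> (\<lambda>i j. \<kappa>) a q \<and> rankA n a \<ge> 2 \<longrightarrow>
          Aq n a q = (1 / (1 + \<kappa>)) *\<^sub>R \<beta> \<and>
          (\<forall>i<n. q i = \<gamma> i / (2 + \<alpha> * (1 - \<kappa>))) \<and>
          sbar n \<gamma> a = (((2 + \<alpha> * (1 - \<kappa>)) / (1 + \<kappa>))\<^sup>2 - norm2sq n \<gamma>)
                         / (real n * (real n - 1)))
     \<and>
     ((\<exists>(a :: nat \<Rightarrow> real^'m) q.
        equilibrium n \<alpha> \<beta> \<gamma> (\<lambda>i j. \<kappa>) a q \<and>
        Aq n a q = (1 / (1 + \<kappa>)) *\<^sub>R \<beta> \<and>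
        (\<forall>i<n. q i = \<gamma> i / (2 + \<alpha> * (1 - \<kappa>))))
      \<longleftrightarrow> rfun n \<gamma> \<le> (2 + \<alpha> * (1 - \<kappa>)) / (1 + \<kappa>)
          \<and> (2 + \<alpha> * (1 - \<kappa>)) / (1 + \<kappa>) \<le> Rfun n \<gamma>)"
proof -
  have "1 + \<kappa> > 0"
    using assms(6) by simp
  have "norm (((2 + \<alpha> * (1 - \<kappa>)) / (1 + \<kappa>)) *\<^sub>R \<beta>) = (2 + \<alpha> * (1 - \<kappa>)) / (1 + \<kappa>)"
    using assms(4,7) \<open>1 + \<kappa> > 0\<close> by simp
  then show ?thesis
    using full_rank_equilibrium_Aq_q[OF assms(3,5) \<open>1 + \<kappa> > 0\<close> assms(7)]
      full_rank_equilibrium_sbar[OF assms(3,5) \<open>1 + \<kappa> > 0\<close> assms(7,4)]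
      exists_equilibrium_Aq_q_iff_unit_weighted_sum[OF assms(3,5) \<open>1 + \<kappa> > 0\<close> assms(7), of \<beta>]
      exists_unit_weighted_sum_eq_iff_rfun_Rfun[of n \<gamma> "((2 + \<alpha> * (1 - \<kappa>)) / (1 + \<kappa>)) *\<^sub>R \<beta>"]
      assms(1,2,5)
    by (simp add: less_imp_le) blast
qed

end
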